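(* Let $L$ be a number field, $\Gamma$ an order of $L$, $K\subseteq L$ a subfield with ring of integers $\mathcal O_K$ and $n=[L:K]$, and $R=\mathrm M_n(\mathcal O_K)$. For each ring morphism $\rho:\Gamma\to R$ there exists a unique ring morphism $\varphi:K\to L$ such that $\rho$ is $\varphi$-compatible. In particular $\operatorname{Hom}(\Gamma,R)/R^\times=\bigsqcup_\varphi\bigl(\operatorname{Hom}_\varphi(\Gamma,R)/R^\times\bigr)$, the disjoint union over all ring morphisms $\varphi:K\to L$.
   Context: For a ring morphism $\varphi:K\to L$, regard $L$ as a $K$-algebra via $\varphi$ and $\mathrm M_n(K)$ as a $K$-algebra via scalar matrices. A ring morphism $\rho:\Gamma\to R$ is $\varphi$-compatible if $\rho\otimes\mathbb Q:L=\Gamma\otimes_{\mathbb Z}\mathbb Q\to R\otimes_{\mathbb Z}\mathbb Q=\mathrm M_n(K)$ is a morphism of $K$-algebras. $\operatorname{Hom}_\varphi(\Gamma,R)$ is the set of $\varphi$-compatible ring morphisms, stable under conjugation by $R^\times$. *)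

theory Defs
  imports Complex_Main "HOL-Computational_Algebra.Polynomial" "Jordan_Normal_Form.Matrix"
begin

text \<open>All number fields are realised as subfields of the complex numbers.\<close>

definition subfield_c :: "complex set \<Rightarrow> bool" where
  "subfield_c F \<longleftrightarrow> 0 \<in> F \<and> 1 \<in> F \<and> (\<forall>x\<in>F. \<forall>y\<in>F. x + y \<in> F \<and> x * y \<in> F)
     \<and> (\<forall>x\<in>F. - x \<in> F) \<and> (\<forall>x\<in>F. x \<noteq> 0 \<longrightarrow> inverse x \<in> F)"

definition lin_comb_over :: "complex set \<Rightarrow> complex set \<Rightarrow> complex set" where
  "lin_comb_over F B = {\<Sum>b\<in>B. c b * b | c. \<forall>b\<in>B. c b \<in> F}"

definition lin_indep_over :: "complex set \<Rightarrow> complex set \<Rightarrow> bool" where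
  "lin_indep_over F B \<longleftrightarrow> (\<forall>c. (\<forall>b\<in>B. c b \<in> F) \<and> (\<Sum>b\<in>B. c b * b) = 0 \<longrightarrow> (\<forall>b\<in>B. c b = 0))"

definition basis_over :: "complex set \<Rightarrow> complex set \<Rightarrow> complex set \<Rightarrow> bool" where
  "basis_over F B V \<longleftrightarrow> finite B \<and> B \<subseteq> V \<and> lin_indep_over F B \<and> lin_comb_over F B = V"

definition field_degree :: "complex set \<Rightarrow> complex set \<Rightarrow> nat" where
  "field_degree F V = card (SOME B. basis_over F B V)"

definition number_field :: "complex set \<Rightarrow> bool" where
  "number_field L \<longleftrightarrow> subfield_c L \<and> (\<exists>B. basis_over \<rat> B L)"

definition order_of :: "complex set \<Rightarrow> complex set \<Rightarrow> bool" where
  "order_of L \<Gamma> \<longleftrightarrow> \<Gamma> \<subseteq> L \<and> 1 \<in> \<Gamma> \<and> (\<forall>x\<in>\<Gamma>. \<forall>y\<in>\<Gamma>. x + y \<in> \<Gamma> \<and> x * y \<in> \<Gamma> \<and> - x \<in> \<Gamma>)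
     \<and> (\<exists>B. finite B \<and> \<Gamma> = {\<Sum>b\<in>B. of_int (c b) * b | c. True})
     \<and> L = {\<Sum>b\<in>S. c b * b | S c. finite S \<and> S \<subseteq> \<Gamma> \<and> (\<forall>b\<in>S. c b \<in> \<rat>)}"

definition algebraic_integer :: "complex \<Rightarrow> bool" where
  "algebraic_integer x \<longleftrightarrow> (\<exists>p :: int poly. lead_coeff p = 1 \<and> poly (map_poly of_int p) x = 0)"

definition ring_of_integers :: "complex set \<Rightarrow> complex set" where
  "ring_of_integers K = {x \<in> K. algebraic_integer x}"

definition field_ring_hom :: "complex set \<Rightarrow> complex set \<Rightarrow> (complex \<Rightarrow> complex) \<Rightarrow> bool" where
  "field_ring_hom K L \<phi> \<longleftrightarrow> \<phi> ` K \<subseteq> L \<and> \<phi> 1 = 1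
     \<and> (\<forall>x\<in>K. \<forall>y\<in>K. \<phi> (x + y) = \<phi> x + \<phi> y \<and> \<phi> (x * y) = \<phi> x * \<phi> y)"

definition mat_over :: "nat \<Rightarrow> complex set \<Rightarrow> complex mat set" where
  "mat_over n A = {M \<in> carrier_mat n n. \<forall>i<n. \<forall>j<n. M $$ (i, j) \<in> A}"

definition mat_ring_hom :: "complex set \<Rightarrow> nat \<Rightarrow> complex set \<Rightarrow> (complex \<Rightarrow> complex mat) \<Rightarrow> bool" where
  "mat_ring_hom \<Gamma> n A \<rho> \<longleftrightarrow> (\<forall>x\<in>\<Gamma>. \<rho> x \<in> mat_over n A) \<and> \<rho> 1 = 1\<^sub>m n
     \<and> (\<forall>x\<in>\<Gamma>. \<forall>y\<in>\<Gamma>. \<rho> (x + y) = \<rho> x + \<rho> y \<and> \<rho> (x * y) = \<rho> x * \<rho> y)"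

text \<open>The extension rho \<otimes> Q : L = Gamma \<otimes> Q \<rightarrow> M_n(O_K) \<otimes> Q = M_n(K):
  every element of L is gamma \<otimes> 1/m, sent to rho(gamma)/m.\<close>
definition tensor_Q :: "complex set \<Rightarrow> (complex \<Rightarrow> complex mat) \<Rightarrow> complex \<Rightarrow> complex mat" where
  "tensor_Q \<Gamma> \<rho> x = (THE M. \<exists>m::int. m > 0 \<and> of_int m * x \<in> \<Gamma>
        \<and> M = (1 / of_int m) \<cdot>\<^sub>m \<rho> (of_int m * x))"

text \<open>phi-compatibility: rho \<otimes> Q is a morphism of K-algebras, L a K-algebra via phi,
  M_n(K) a K-algebra via scalar matrices.\<close>
definition compatible :: "complex set \<Rightarrow> complex set \<Rightarrow> nat \<Rightarrow> complex set
     \<Rightarrow> (complex \<Rightarrow> complex) \<Rightarrow> (complex \<Rightarrow> complex mat) \<Rightarrow> bool" where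
  "compatible K L n \<Gamma> \<phi> \<rho> \<longleftrightarrow>
     (let f = tensor_Q \<Gamma> \<rho> in
       (\<forall>x\<in>L. f x \<in> mat_over n K) \<and> f 1 = 1\<^sub>m n
       \<and> (\<forall>x\<in>L. \<forall>y\<in>L. f (x + y) = f x + f y \<and> f (x * y) = f x * f y)
       \<and> (\<forall>k\<in>K. \<forall>x\<in>L. f (\<phi> k * x) = k \<cdot>\<^sub>m f x))"

end

(* Extend rho to the Q-algebra morphism f = rho (x) Q : L -> M_n(K).  As L is a field, f is
   injective, and so is the map sending x to the first column of f x in K^n.  Both L and K^n
   have Q-dimension [L:Q] (a K-basis identifies K^n with L), so this map is onto.  Given
   k in K, take l whose first column is k e_1: f l commutes with the matrices f y, whose first
   columns run through all unit vectors e_j, hence f l = k 1.  Then phi k := f^-1 (k 1) is a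
   ring morphism K -> L, and it is the only one making rho phi-compatible, since compatibility
   forces f (phi k) = k 1.  Conjugating rho by a unit U of M_n(O_K) conjugates f by U, which
   preserves compatibility. *)

theory Submission
  imports Defs
begin

section \<open>Subfields of the complex numbers and linear algebra over them\<close>

lemma subfield_c_zero: "subfield_c F \<Longrightarrow> 0 \<in> F"
  and subfield_c_one: "subfield_c F \<Longrightarrow> 1 \<in> F"
  and subfield_c_add: "subfield_c F \<Longrightarrow> x \<in> F \<Longrightarrow> y \<in> F \<Longrightarrow> x + y \<in> F"
  and subfield_c_mult: "subfield_c F \<Longrightarrow> x \<in> F \<Longrightarrow> y \<in> F \<Longrightarrow> x * y \<in> F"
  and subfield_c_uminus: "subfield_c F \<Longrightarrow> x \<in> F \<Longrightarrow> - x \<in> F"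
  and subfield_c_inverse: "subfield_c F \<Longrightarrow> x \<in> F \<Longrightarrow> inverse x \<in> F"
  unfolding subfield_c_def by auto

lemma subfield_c_diff: "subfield_c F \<Longrightarrow> x \<in> F \<Longrightarrow> y \<in> F \<Longrightarrow> x - y \<in> F"
  by (metis diff_conv_add_uminus subfield_c_add subfield_c_uminus)

lemma subfield_c_divide: "subfield_c F \<Longrightarrow> x \<in> F \<Longrightarrow> y \<in> F \<Longrightarrow> x / y \<in> F"
  by (metis divide_inverse subfield_c_inverse subfield_c_mult)

lemma subfield_c_sum:
  assumes "subfield_c F" and "\<And>b. b \<in> S \<Longrightarrow> g b \<in> F"
  shows "sum g S \<in> F"
  using assms(2) by (induction S rule: infinite_finite_induct)
    (auto intro: subfield_c_zero subfield_c_add assms(1))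

lemma subfield_c_of_int:
  assumes "subfield_c F" shows "of_int k \<in> F"
proof -
  have "of_nat m \<in> F" for m
    by (induction m) (auto intro: subfield_c_zero subfield_c_one subfield_c_add assms)
  then show ?thesis
    by (cases k rule: int_cases2) (auto intro: subfield_c_uminus assms)
qed

lemma subfield_c_Rats:
  assumes "subfield_c F" and "x \<in> \<rat>" shows "x \<in> F"
proof -
  obtain a b where "x = of_int a / of_int b"
    using assms(2) by (metis Rats_cases')
  then show ?thesis by (simp add: assms(1) subfield_c_divide subfield_c_of_int)
qed

interpretation rat_space: vector_space "\<lambda>(q::rat) (z::complex). of_rat q * z"
  by unfold_locales (auto simp: algebra_simps of_rat_add of_rat_mult)

lemma Rats_valued_ex_of_rat:
  fixes c :: "'a \<Rightarrow> 'b::field_char_0"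
  assumes "\<forall>b\<in>B. c b \<in> \<rat>"
  shows "\<exists>u. \<forall>b\<in>B. c b = of_rat (u b)"
proof
  show "\<forall>b\<in>B. c b = of_rat (inv_into UNIV of_rat (c b))"
    using assms unfolding Rats_def by (simp add: f_inv_into_f)
qed

lemma lin_comb_over_Rats:
  assumes "finite B" shows "lin_comb_over \<rat> B = rat_space.span B"
proof
  show "lin_comb_over \<rat> B \<subseteq> rat_space.span B"
  proof
    fix x assume "x \<in> lin_comb_over \<rat> B"
    then obtain c where x: "x = (\<Sum>b\<in>B. c b * b)" and c: "\<forall>b\<in>B. c b \<in> \<rat>"
      unfolding lin_comb_over_def by blast
    obtain u where "\<forall>b\<in>B. c b = of_rat (u b)"
      using Rats_valued_ex_of_rat[OF c] by blast
    then have "x = (\<Sum>b\<in>B. of_rat (u b) * b)" using x by simp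
    then show "x \<in> rat_space.span B" unfolding rat_space.span_finite[OF assms] by blast
  qed
  show "rat_space.span B \<subseteq> lin_comb_over \<rat> B"
    unfolding rat_space.span_finite[OF assms] lin_comb_over_def by auto
qed

lemma lin_indep_over_Rats:
  assumes "finite B" shows "lin_indep_over \<rat> B \<longleftrightarrow> rat_space.independent B"
proof
  assume indep: "lin_indep_over \<rat> B"
  show "rat_space.independent B"
  proof (rule rat_space.independent_if_scalars_zero[OF assms])
    fix u b assume "(\<Sum>b\<in>B. of_rat (u b) * b) = 0" and "b \<in> B"
    then show "u b = 0"
      using indep[unfolded lin_indep_over_def, rule_format, of "\<lambda>b. of_rat (u b)"] by simp
  qed
next
  assume indep: "rat_space.independent B"
  show "lin_indep_over \<rat> B"
    unfolding lin_indep_over_def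
  proof (intro allI impI ballI, elim conjE)
    fix c b assume "\<forall>b\<in>B. c b \<in> \<rat>" and sum: "(\<Sum>b\<in>B. c b * b) = 0" and "b \<in> B"
    obtain u where c: "\<forall>b\<in>B. c b = of_rat (u b)"
      using Rats_valued_ex_of_rat[OF \<open>\<forall>b\<in>B. c b \<in> \<rat>\<close>] by blast
    have "(\<Sum>b\<in>B. of_rat (u b) * b) = 0" using sum by (simp add: c)
    then show "c b = 0"
      using rat_space.independentD[OF indep assms order_refl] \<open>b \<in> B\<close> c by simp
  qed
qed

lemma Rats_linear_inj_on_imp_surj_on:
  assumes B: "basis_over \<rat> B L"
    and maps: "\<And>x. x \<in> L \<Longrightarrow> p x \<in> L"
    and add: "\<And>x y. x \<in> L \<Longrightarrow> y \<in> L \<Longrightarrow> p (x + y) = p x + p y"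
    and scale: "\<And>r x. r \<in> \<rat> \<Longrightarrow> x \<in> L \<Longrightarrow> p (r * x) = r * p x"
    and inj: "inj_on p L"
  shows "p ` L = L"
proof -
  have fin: "finite B" and "B \<subseteq> L" and L: "L = rat_space.span B"
    and indep: "rat_space.independent B"
    using B lin_comb_over_Rats lin_indep_over_Rats unfolding basis_over_def by auto
  have inj_B: "inj_on p B" using inj \<open>B \<subseteq> L\<close> by (rule inj_on_subset)
  have comb_in_L: "(\<Sum>b\<in>S. of_rat (u b) * b) \<in> L" if "S \<subseteq> B" for S u
    unfolding L using that
    by (intro rat_space.span_sum rat_space.span_scale rat_space.span_base) auto
  have "0 \<in> L" using comb_in_L[of "{}"] by simp
  have p_sum: "p (\<Sum>b\<in>S. of_rat (u b) * b) = (\<Sum>b\<in>S. of_rat (u b) * p b)" if "S \<subseteq> B" for S u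
    using finite_subset[OF that fin] that
  proof (induction S rule: finite_induct)
    case empty
    show ?case using add[OF \<open>0 \<in> L\<close> \<open>0 \<in> L\<close>] by simp
  next
    case (insert a S)
    have "of_rat (u a) * a \<in> L" using comb_in_L[of "{a}"] insert.prems by simp
    moreover have "p (of_rat (u a) * a) = of_rat (u a) * p a"
      using insert.prems \<open>B \<subseteq> L\<close> by (intro scale) auto
    ultimately show ?case
      using insert comb_in_L[of S] by (simp add: add)
  qed
  have p_sum_in: "(\<Sum>b\<in>B. of_rat (u b) * b) \<in> L" for u
    by (rule comb_in_L) simp
  have indep_image: "rat_space.independent (p ` B)"
  proof (rule rat_space.independent_if_scalars_zero)
    fix u v assume sum: "(\<Sum>v\<in>p ` B. of_rat (u v) * v) = 0" and "v \<in> p ` B"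
    then obtain b where b: "b \<in> B" "v = p b" by blast
    have "p (\<Sum>b\<in>B. of_rat (u (p b)) * b) = p 0"
      using sum p_sum[OF order_refl] add[OF \<open>0 \<in> L\<close> \<open>0 \<in> L\<close>]
      by (simp add: sum.reindex[OF inj_B])
    then have "(\<Sum>b\<in>B. of_rat (u (p b)) * b) = 0"
      by (rule inj_onD[OF inj _ p_sum_in \<open>0 \<in> L\<close>])
    then show "u v = 0"
      using rat_space.independentD[OF indep fin order_refl] b by simp
  qed (use fin in simp)
  have "L \<subseteq> rat_space.span (p ` B)"
  proof
    fix y assume "y \<in> L"
    show "y \<in> rat_space.span (p ` B)"
    proof (rule ccontr)
      assume y: "y \<notin> rat_space.span (p ` B)"
      have "p ` B \<subseteq> L" using maps \<open>B \<subseteq> L\<close> by auto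
      then have "card (insert y (p ` B)) \<le> card B"
        using rat_space.independent_span_bound[OF fin rat_space.independent_insertI[OF y indep_image]]
          \<open>y \<in> L\<close> L by auto
      moreover have "y \<notin> p ` B" using y rat_space.span_base by blast
      ultimately show False using fin card_image[OF inj_B] by simp
    qed
  qed
  moreover have "rat_space.span (p ` B) \<subseteq> p ` L"
  proof
    fix y assume "y \<in> rat_space.span (p ` B)"
    then obtain u where "y = (\<Sum>v\<in>p ` B. of_rat (u v) * v)"
      using rat_space.span_finite[of "p ` B"] fin by auto
    then have "y = p (\<Sum>b\<in>B. of_rat (u (p b)) * b)"
      by (simp add: sum.reindex[OF inj_B] p_sum)
    then show "y \<in> p ` L" using p_sum_in by (rule image_eqI)
  qed
  ultimately show ?thesis using maps by blast
qed

lemma lin_indep_over_antimono: "F \<subseteq> G \<Longrightarrow> lin_indep_over G B \<Longrightarrow> lin_indep_over F B"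
  unfolding lin_indep_over_def by blast

lemma lin_comb_overI:
  "x = (\<Sum>b\<in>B. c b * b) \<Longrightarrow> \<forall>b\<in>B. c b \<in> F \<Longrightarrow> x \<in> lin_comb_over F B"
  unfolding lin_comb_over_def by blast

lemma lin_comb_over_subset:
  assumes "subfield_c L" and "K \<subseteq> L" and "B \<subseteq> L"
  shows "lin_comb_over K B \<subseteq> L"
  unfolding lin_comb_over_def
  using assms by (auto intro!: subfield_c_sum subfield_c_mult)

lemma lin_comb_over_base:
  assumes "subfield_c F" and "finite B" and "x \<in> B"
  shows "x \<in> lin_comb_over F B"
proof -
  have "x = (\<Sum>b\<in>B. (if b = x then 1 else 0) * b)"
    using assms(2,3) by (simp add: if_distrib[of "\<lambda>c. c * _"] cong: if_cong)
  moreover have "\<forall>b\<in>B. (if b = x then 1 else 0) \<in> F"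
    using subfield_c_zero subfield_c_one assms(1) by auto
  ultimately show ?thesis by (rule lin_comb_overI)
qed

lemma lin_comb_over_if_dependent_insert:
  assumes F: "subfield_c F" and "finite B" and indep: "lin_indep_over F B"
    and dep: "\<not> lin_indep_over F (insert x B)" and "x \<notin> B"
  shows "x \<in> lin_comb_over F B"
proof -
  obtain c where c: "\<forall>b\<in>insert x B. c b \<in> F" and sum: "(\<Sum>b\<in>insert x B. c b * b) = 0"
    and nonzero: "\<exists>b\<in>insert x B. c b \<noteq> 0"
    using dep unfolding lin_indep_over_def by blast
  have sum_B: "c x * x + (\<Sum>b\<in>B. c b * b) = 0"
    using sum \<open>finite B\<close> \<open>x \<notin> B\<close> by simp
  have "c x \<noteq> 0"
  proof
    assume "c x = 0"
    then have "\<forall>b\<in>B. c b = 0"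
      using indep sum_B c unfolding lin_indep_over_def by simp
    then show False using nonzero \<open>c x = 0\<close> by blast
  qed
  then have "x = (\<Sum>b\<in>B. (- c b / c x) * b)"
    using sum_B by (simp add: sum_divide_distrib[symmetric] sum_negf field_simps add_eq_0_iff)
  moreover have "\<forall>b\<in>B. - c b / c x \<in> F"
    using c F by (auto intro: subfield_c_divide subfield_c_uminus)
  ultimately show ?thesis by (rule lin_comb_overI)
qed

lemma basis_over_exists:
  assumes K: "subfield_c K" and "K \<subseteq> L" and L: "subfield_c L" and BQ: "basis_over \<rat> BQ L"
  shows "\<exists>B. basis_over K B L"
proof -
  let ?indep = "\<lambda>B. finite B \<and> B \<subseteq> L \<and> lin_indep_over K B"
  have bound: "card B < card BQ + 1" if "?indep B" for B
  proof -
    have "lin_indep_over \<rat> B"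
      using that lin_indep_over_antimono subfield_c_Rats[OF K] by blast
    then have "rat_space.independent B" using that lin_indep_over_Rats by blast
    moreover have "B \<subseteq> rat_space.span BQ"
      using that BQ lin_comb_over_Rats unfolding basis_over_def by auto
    ultimately show ?thesis
      using rat_space.independent_span_bound BQ unfolding basis_over_def by fastforce
  qed
  have "?indep {}" unfolding lin_indep_over_def by simp
  then obtain B where B: "?indep B" and max: "\<And>B'. ?indep B' \<Longrightarrow> card B' \<le> card B"
    using ex_has_greatest_nat[of ?indep "{}" card "card BQ + 1"] bound by blast
  have "L \<subseteq> lin_comb_over K B"
  proof
    fix x assume "x \<in> L"
    show "x \<in> lin_comb_over K B"
    proof (cases "x \<in> B")
      case True
      then show ?thesis using lin_comb_over_base K B by blast
    next
      case False
      then have "\<not> ?indep (insert x B)" using max[of "insert x B"] B by fastforce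
      then have "\<not> lin_indep_over K (insert x B)" using B \<open>x \<in> L\<close> by blast
      then show ?thesis using lin_comb_over_if_dependent_insert K B False by blast
    qed
  qed
  then have "basis_over K B L"
    using B lin_comb_over_subset[OF L \<open>K \<subseteq> L\<close>] unfolding basis_over_def by blast
  then show ?thesis ..
qed

lemma field_degree_basis:
  assumes "number_field L" and "subfield_c K" and "K \<subseteq> L"
  obtains B where "basis_over K B L" and "card B = field_degree K L"
proof -
  have "\<exists>B. basis_over K B L"
    using assms basis_over_exists unfolding number_field_def by blast
  then show ?thesis
    using that someI_ex unfolding field_degree_def by metis
qed

lemma field_degree_pos:
  assumes "number_field L" and "subfield_c K" and "K \<subseteq> L"
  shows "0 < field_degree K L"
proof -
  obtain B where B: "basis_over K B L" and card: "card B = field_degree K L"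
    using field_degree_basis[OF assms] .
  have "1 \<in> L" using assms(1) subfield_c_one unfolding number_field_def by blast
  then have "B \<noteq> {}"
    using B unfolding basis_over_def lin_comb_over_def by auto
  then show ?thesis using B card unfolding basis_over_def by auto
qed

lemma lin_indep_over_enumD:
  assumes indep: "lin_indep_over F B" and e: "bij_betw e {..<n} B"
    and d: "\<forall>i<n. d i \<in> F" and sum: "(\<Sum>i<n. d i * e i) = 0" and "i < n"
  shows "d i = 0"
proof -
  define c where "c b = d (the_inv_into {..<n} e b)" for b
  have inj: "inj_on e {..<n}" using e by (rule bij_betw_imp_inj_on)
  have "(\<Sum>b\<in>B. c b * b) = (\<Sum>i<n. c (e i) * e i)"
    using sum.reindex_bij_betw[OF e, of "\<lambda>b. c b * b"] by simp
  also have "\<dots> = 0"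
    using sum by (simp add: c_def the_inv_into_f_f[OF inj])
  finally have sum_B: "(\<Sum>b\<in>B. c b * b) = 0" .
  have "\<forall>b\<in>B. c b \<in> F"
  proof
    fix b assume "b \<in> B"
    then have "the_inv_into {..<n} e b \<in> {..<n}"
      using the_inv_into_into[OF inj] bij_betw_imp_surj_on[OF e] by blast
    then show "c b \<in> F" using d by (simp add: c_def)
  qed
  then have "\<forall>b\<in>B. c b = 0"
    using indep sum_B unfolding lin_indep_over_def by blast
  then show "d i = 0"
    using \<open>i < n\<close> bij_betw_apply[OF e] the_inv_into_f_f[OF inj, of i] by (metis c_def lessThan_iff)
qed

lemma additive_on_of_int:
  fixes g :: "'a::ring_1 \<Rightarrow> 'b::ring_1"
  assumes closed: "\<And>x y. x \<in> G \<Longrightarrow> y \<in> G \<Longrightarrow> x - y \<in> G"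
    and add: "\<And>x y. x \<in> G \<Longrightarrow> y \<in> G \<Longrightarrow> g (x + y) = g x + g y"
    and "y \<in> G"
  shows "of_int k * y \<in> G" and "g (of_int k * y) = of_int k * g y"
proof -
  have "0 \<in> G" using closed[OF \<open>y \<in> G\<close> \<open>y \<in> G\<close>] by simp
  have neg: "- x \<in> G" if "x \<in> G" for x
    using closed[OF \<open>0 \<in> G\<close> that] by simp
  have "g 0 = 0" using add[OF \<open>0 \<in> G\<close> \<open>0 \<in> G\<close>] by simp
  have g_neg: "g (- x) = - g x" if "x \<in> G" for x
    using add[OF that neg[OF that]] \<open>g 0 = 0\<close> by (simp add: eq_neg_iff_add_eq_0 add.commute)
  have nat: "of_nat m * y \<in> G \<and> g (of_nat m * y) = of_nat m * g y" for m
  proof (induction m)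
    case 0
    show ?case using \<open>0 \<in> G\<close> \<open>g 0 = 0\<close> by simp
  next
    case (Suc m)
    have "of_nat (Suc m) * y = of_nat m * y + y" by (simp add: algebra_simps)
    moreover have "of_nat m * y + y \<in> G" using closed[OF _ neg] Suc \<open>y \<in> G\<close> by fastforce
    ultimately show ?case using Suc add[OF _ \<open>y \<in> G\<close>, of "of_nat m * y"] by (simp add: algebra_simps)
  qed
  show "of_int k * y \<in> G" and "g (of_int k * y) = of_int k * g y"
    using nat nat[THEN conjunct1, THEN neg] g_neg by (cases k rule: int_cases2; simp)+
qed

lemma additive_on_Rats:
  fixes g :: "complex \<Rightarrow> complex"
  assumes L: "subfield_c L"
    and add: "\<And>x y. x \<in> L \<Longrightarrow> y \<in> L \<Longrightarrow> g (x + y) = g x + g y"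
    and "r \<in> \<rat>" and "x \<in> L"
  shows "g (r * x) = r * g x"
proof -
  obtain a b where r: "r = of_int a / of_int b" and "b \<noteq> 0"
    using \<open>r \<in> \<rat>\<close> by (metis Rats_cases' less_irrefl)
  have "r * x \<in> L" using assms subfield_c_mult subfield_c_Rats by blast
  have closed: "\<And>x y. x \<in> L \<Longrightarrow> y \<in> L \<Longrightarrow> x - y \<in> L" using L subfield_c_diff by blast
  have "of_int b * g (r * x) = g (of_int b * (r * x))"
    using additive_on_of_int(2)[OF closed add \<open>r * x \<in> L\<close>] by simp
  also have "\<dots> = g (of_int a * x)" using r \<open>b \<noteq> 0\<close> by simp
  also have "\<dots> = of_int a * g x"
    using additive_on_of_int(2)[OF closed add \<open>x \<in> L\<close>] .
  finally have "g (r * x) = of_int a * g x / of_int b"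
    using \<open>b \<noteq> 0\<close> by (simp add: eq_divide_eq mult.commute)
  then show ?thesis using r by simp
qed

lemma smult_smult_mat: "a \<cdot>\<^sub>m (b \<cdot>\<^sub>m A) = (a * b :: 'a::semigroup_mult) \<cdot>\<^sub>m A"
  by (rule eq_matI) (auto simp: mult.assoc)

lemma one_smult_mat [simp]: "(1 :: 'a::monoid_mult) \<cdot>\<^sub>m A = A"
  by (rule eq_matI) auto

lemma mat_over_mono: "A \<subseteq> B \<Longrightarrow> mat_over n A \<subseteq> mat_over n B"
  unfolding mat_over_def by blast

lemma mat_over_mult:
  assumes K: "subfield_c K" and "A \<in> mat_over n K" and "B \<in> mat_over n K"
  shows "A * B \<in> mat_over n K"
  using assms unfolding mat_over_def
  by (auto simp: scalar_prod_def intro!: subfield_c_sum[OF K] subfield_c_mult[OF K])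

lemma mat_mult_unit_col:
  assumes "A \<in> carrier_mat n n" and "B \<in> carrier_mat n n" and "i < n" and "j < n"
    and col: "\<And>k. k < n \<Longrightarrow> B $$ (k, 0) = (if k = j then c else 0)"
  shows "(A * B) $$ (i, 0) = A $$ (i, j) * c"
proof -
  have "(A * B) $$ (i, 0) = (\<Sum>k<n. A $$ (i, k) * B $$ (k, 0))"
    using assms by (simp add: scalar_prod_def atLeast0LessThan)
  also have "\<dots> = A $$ (i, j) * c"
    using \<open>j < n\<close> by (simp add: col if_distrib[of "\<lambda>x. _ * x"] cong: if_cong)
  finally show ?thesis .
qed

lemma mult_conj_mat:
  fixes A B U V :: "'a::semiring_1 mat"
  assumes "A \<in> carrier_mat n n" "B \<in> carrier_mat n n" "U \<in> carrier_mat n n" "V \<in> carrier_mat n n"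
    and "V * U = 1\<^sub>m n"
  shows "(U * A * V) * (U * B * V) = U * (A * B) * V"
proof -
  have "(U * A * V) * (U * B * V) = U * A * ((V * U) * B) * V"
    using assms(1-4) by (simp add: assoc_mult_mat[of _ n n _ n _ n])
  then show ?thesis using assms by (simp add: assoc_mult_mat[of _ n n _ n _ n])
qed

section \<open>Orders and the extension of a representation to L\<close>

lemma order_of_one: "order_of L \<Gamma> \<Longrightarrow> 1 \<in> \<Gamma>"
  and order_of_add: "order_of L \<Gamma> \<Longrightarrow> x \<in> \<Gamma> \<Longrightarrow> y \<in> \<Gamma> \<Longrightarrow> x + y \<in> \<Gamma>"
  and order_of_mult: "order_of L \<Gamma> \<Longrightarrow> x \<in> \<Gamma> \<Longrightarrow> y \<in> \<Gamma> \<Longrightarrow> x * y \<in> \<Gamma>"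
  and order_of_uminus: "order_of L \<Gamma> \<Longrightarrow> x \<in> \<Gamma> \<Longrightarrow> - x \<in> \<Gamma>"
  unfolding order_of_def by auto

lemma order_of_diff: "order_of L \<Gamma> \<Longrightarrow> x \<in> \<Gamma> \<Longrightarrow> y \<in> \<Gamma> \<Longrightarrow> x - y \<in> \<Gamma>"
  by (metis diff_conv_add_uminus order_of_add order_of_uminus)

lemma order_of_of_int_mult: "order_of L \<Gamma> \<Longrightarrow> y \<in> \<Gamma> \<Longrightarrow> of_int k * y \<in> \<Gamma>"
  using additive_on_of_int(1)[of \<Gamma> "\<lambda>x. x"] order_of_diff by blast

lemma order_of_denominator:
  assumes \<Gamma>: "order_of L \<Gamma>" and "x \<in> L"
  shows "\<exists>m::int. m > 0 \<and> of_int m * x \<in> \<Gamma>"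
proof -
  obtain S c where x: "x = (\<Sum>b\<in>S. c b * b)" and "finite S" "S \<subseteq> \<Gamma>" "\<forall>b\<in>S. c b \<in> \<rat>"
    using \<Gamma> \<open>x \<in> L\<close> unfolding order_of_def by blast
  have "\<exists>m::int. m > 0 \<and> of_int m * (\<Sum>b\<in>S. c b * b) \<in> \<Gamma>"
    using \<open>finite S\<close> \<open>S \<subseteq> \<Gamma>\<close> \<open>\<forall>b\<in>S. c b \<in> \<rat>\<close>
  proof (induction S rule: finite_induct)
    case empty
    show ?case using order_of_of_int_mult[OF \<Gamma> order_of_one[OF \<Gamma>], of 0]
      by (intro exI[of _ 1]) simp
  next
    case (insert a S)
    then obtain m :: int where "m > 0" and m: "of_int m * (\<Sum>b\<in>S. c b * b) \<in> \<Gamma>" by auto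
    obtain p q where ca: "c a = of_int p / of_int q" and "q > 0"
      using insert.prems by (metis Rats_cases' insert_iff)
    have "of_int (m * q) * (\<Sum>b\<in>insert a S. c b * b)
        = of_int q * (of_int m * (\<Sum>b\<in>S. c b * b)) + of_int (m * p) * a"
      using insert.hyps \<open>q > 0\<close> ca by (simp add: algebra_simps)
    also have "\<dots> \<in> \<Gamma>"
      using order_of_of_int_mult[OF \<Gamma> m] order_of_of_int_mult[OF \<Gamma>, of a "m * p"] insert.prems
      by (intro order_of_add[OF \<Gamma>]) auto
    finally show ?case using \<open>m > 0\<close> \<open>q > 0\<close> by (intro exI[of _ "m * q"]) simp
  qed
  then show ?thesis using x by simp
qed

lemma order_of_common_denominator:
  assumes \<Gamma>: "order_of L \<Gamma>" and "x \<in> L" and "y \<in> L"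
  obtains m :: int where "m > 0" and "of_int m * x \<in> \<Gamma>" and "of_int m * y \<in> \<Gamma>"
proof -
  obtain a b :: int where "a > 0" "of_int a * x \<in> \<Gamma>" "b > 0" "of_int b * y \<in> \<Gamma>"
    using order_of_denominator[OF \<Gamma>] assms by metis
  then have "of_int (a * b) * x \<in> \<Gamma>" and "of_int (a * b) * y \<in> \<Gamma>"
    using order_of_of_int_mult[OF \<Gamma>, of "of_int a * x" b] order_of_of_int_mult[OF \<Gamma>, of "of_int b * y" a]
    by (simp_all add: ac_simps)
  then show ?thesis using that[of "a * b"] \<open>a > 0\<close> \<open>b > 0\<close> by simp
qed

text \<open>No condition is imposed on the entries of rho, so that the conjugates U rho V qualify
  too, without knowing that the algebraic integers form a ring.\<close>

locale additive_order_rep =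
  fixes L \<Gamma> :: "complex set" and n :: nat and \<rho> :: "complex \<Rightarrow> complex mat"
  assumes order: "order_of L \<Gamma>"
    and rep_carrier: "\<And>x. x \<in> \<Gamma> \<Longrightarrow> \<rho> x \<in> carrier_mat n n"
    and rep_add: "\<And>x y. x \<in> \<Gamma> \<Longrightarrow> y \<in> \<Gamma> \<Longrightarrow> \<rho> (x + y) = \<rho> x + \<rho> y"
begin

lemma rep_of_int:
  assumes "y \<in> \<Gamma>" shows "\<rho> (of_int k * y) = of_int k \<cdot>\<^sub>m \<rho> y"
proof (rule eq_matI)
  fix i j assume "i < dim_row (of_int k \<cdot>\<^sub>m \<rho> y)" and "j < dim_col (of_int k \<cdot>\<^sub>m \<rho> y)"
  then have ij: "i < n" "j < n" using rep_carrier[OF assms] by auto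
  have "\<rho> (x + y) $$ (i, j) = \<rho> x $$ (i, j) + \<rho> y $$ (i, j)" if "x \<in> \<Gamma>" "y \<in> \<Gamma>" for x y
    using ij rep_carrier[OF that(1)] rep_carrier[OF that(2)] by (simp add: rep_add[OF that])
  then have "(\<lambda>z. \<rho> z $$ (i, j)) (of_int k * y) = of_int k * (\<lambda>z. \<rho> z $$ (i, j)) y"
    using assms order_of_diff[OF order] by (intro additive_on_of_int(2)[of \<Gamma>])
  then show "\<rho> (of_int k * y) $$ (i, j) = (of_int k \<cdot>\<^sub>m \<rho> y) $$ (i, j)"
    using ij rep_carrier[OF assms] by simp
qed (use rep_carrier[OF assms] rep_carrier[OF order_of_of_int_mult[OF order assms]] in auto)

lemma tensor_Q_eq:
  assumes "m > 0" and m: "of_int m * x \<in> \<Gamma>"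
  shows "tensor_Q \<Gamma> \<rho> x = (1 / of_int m) \<cdot>\<^sub>m \<rho> (of_int m * x)"
  unfolding tensor_Q_def
proof (rule the_equality)
  show "\<exists>m'::int. m' > 0 \<and> of_int m' * x \<in> \<Gamma>
      \<and> (1 / of_int m) \<cdot>\<^sub>m \<rho> (of_int m * x) = (1 / of_int m') \<cdot>\<^sub>m \<rho> (of_int m' * x)"
    using assms by blast
next
  fix M assume "\<exists>m'::int. m' > 0 \<and> of_int m' * x \<in> \<Gamma> \<and> M = (1 / of_int m') \<cdot>\<^sub>m \<rho> (of_int m' * x)"
  then obtain m' :: int where "m' > 0" and m': "of_int m' * x \<in> \<Gamma>"
    and M: "M = (1 / of_int m') \<cdot>\<^sub>m \<rho> (of_int m' * x)" by blast
  have cross: "of_int m \<cdot>\<^sub>m \<rho> (of_int m' * x) = of_int m' \<cdot>\<^sub>m \<rho> (of_int m * x)"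
    using rep_of_int[OF m', of m] rep_of_int[OF m, of m'] by (simp add: mult.left_commute)
  have "M = (1 / (of_int m * of_int m')) \<cdot>\<^sub>m (of_int m \<cdot>\<^sub>m \<rho> (of_int m' * x))"
    using M \<open>m > 0\<close> by (simp add: smult_smult_mat)
  also have "\<dots> = (1 / of_int m) \<cdot>\<^sub>m \<rho> (of_int m * x)"
    unfolding cross using \<open>m' > 0\<close> by (simp add: smult_smult_mat)
  finally show "M = (1 / of_int m) \<cdot>\<^sub>m \<rho> (of_int m * x)" .
qed

lemma tensor_Q_rep: "x \<in> \<Gamma> \<Longrightarrow> tensor_Q \<Gamma> \<rho> x = \<rho> x"
  using tensor_Q_eq[of 1 x] by simp

lemma tensor_Q_add:
  assumes "x \<in> L" and "y \<in> L"
  shows "tensor_Q \<Gamma> \<rho> (x + y) = tensor_Q \<Gamma> \<rho> x + tensor_Q \<Gamma> \<rho> y"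
proof -
  obtain m where "m > 0" and mx: "of_int m * x \<in> \<Gamma>" and my: "of_int m * y \<in> \<Gamma>"
    using order_of_common_denominator[OF order assms] .
  have "of_int m * (x + y) = of_int m * x + of_int m * y" by (simp add: distrib_left)
  moreover have "of_int m * x + of_int m * y \<in> \<Gamma>" using order_of_add[OF order mx my] .
  ultimately show ?thesis
    using \<open>m > 0\<close> mx my rep_add[OF mx my] rep_carrier[OF mx] rep_carrier[OF my]
    by (simp add: tensor_Q_eq add_smult_distrib_left_mat)
qed

lemma tensor_Q_mat_over:
  assumes "subfield_c K" and rep_K: "\<And>x. x \<in> \<Gamma> \<Longrightarrow> \<rho> x \<in> mat_over n K" and "x \<in> L"
  shows "tensor_Q \<Gamma> \<rho> x \<in> mat_over n K"
proof -
  obtain m where "m > 0" and m: "of_int m * x \<in> \<Gamma>"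
    using order_of_denominator[OF order \<open>x \<in> L\<close>] by blast
  have "\<rho> (of_int m * x) $$ (i, j) / of_int m \<in> K" if "i < n" and "j < n" for i j
    using rep_K[OF m] that subfield_c_divide[OF \<open>subfield_c K\<close> _ subfield_c_of_int[OF \<open>subfield_c K\<close>]]
    unfolding mat_over_def by blast
  then show ?thesis
    using rep_carrier[OF m] unfolding tensor_Q_eq[OF \<open>m > 0\<close> m] mat_over_def by simp
qed

lemma conj_additive_order_rep:
  assumes "U \<in> carrier_mat n n" and "V \<in> carrier_mat n n"
  shows "additive_order_rep L \<Gamma> n (\<lambda>x. U * \<rho> x * V)"
proof
  fix x y assume "x \<in> \<Gamma>" and "y \<in> \<Gamma>"
  then show "U * \<rho> (x + y) * V = U * \<rho> x * V + U * \<rho> y * V"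
    using assms rep_carrier[OF \<open>x \<in> \<Gamma>\<close>] rep_carrier[OF \<open>y \<in> \<Gamma>\<close>]
    by (simp add: rep_add mult_add_distrib_mat[of _ n n] add_mult_distrib_mat[of _ n n])
qed (use order rep_carrier assms in auto)

lemma tensor_Q_conj:
  assumes "U \<in> carrier_mat n n" and "V \<in> carrier_mat n n" and "x \<in> L"
  shows "tensor_Q \<Gamma> (\<lambda>x. U * \<rho> x * V) x = U * tensor_Q \<Gamma> \<rho> x * V"
proof -
  interpret conj: additive_order_rep L \<Gamma> n "\<lambda>x. U * \<rho> x * V"
    using conj_additive_order_rep[OF assms(1,2)] .
  obtain m where "m > 0" and m: "of_int m * x \<in> \<Gamma>"
    using order_of_denominator[OF order \<open>x \<in> L\<close>] by blast
  show ?thesis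
    using rep_carrier[OF m] assms
    by (simp add: conj.tensor_Q_eq[OF \<open>m > 0\<close> m] tensor_Q_eq[OF \<open>m > 0\<close> m]
        mult_smult_distrib[of _ n n] mult_smult_assoc_mat[of _ n n])
qed

end

locale order_ring_rep = additive_order_rep +
  assumes rep_one: "\<rho> 1 = 1\<^sub>m n"
    and rep_mult: "\<And>x y. x \<in> \<Gamma> \<Longrightarrow> y \<in> \<Gamma> \<Longrightarrow> \<rho> (x * y) = \<rho> x * \<rho> y"
begin

lemma tensor_Q_one: "tensor_Q \<Gamma> \<rho> 1 = 1\<^sub>m n"
  using tensor_Q_rep[OF order_of_one[OF order]] rep_one by simp

lemma tensor_Q_mult:
  assumes "x \<in> L" and "y \<in> L"
  shows "tensor_Q \<Gamma> \<rho> (x * y) = tensor_Q \<Gamma> \<rho> x * tensor_Q \<Gamma> \<rho> y"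
proof -
  obtain m where "m > 0" and mx: "of_int m * x \<in> \<Gamma>" and my: "of_int m * y \<in> \<Gamma>"
    using order_of_common_denominator[OF order assms] .
  have prod: "of_int (m * m) * (x * y) = (of_int m * x) * (of_int m * y)" by (simp add: ac_simps)
  have "of_int (m * m) * (x * y) \<in> \<Gamma>" unfolding prod by (rule order_of_mult[OF order mx my])
  with \<open>m > 0\<close> have "tensor_Q \<Gamma> \<rho> (x * y) = (1 / of_int (m * m)) \<cdot>\<^sub>m \<rho> (of_int (m * m) * (x * y))"
    by (intro tensor_Q_eq) simp_all
  also have "\<dots> = (1 / of_int (m * m)) \<cdot>\<^sub>m \<rho> ((of_int m * x) * (of_int m * y))"
    unfolding prod ..
  also have "\<dots> = ((1 / of_int m) \<cdot>\<^sub>m \<rho> (of_int m * x)) * ((1 / of_int m) \<cdot>\<^sub>m \<rho> (of_int m * y))"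
    using rep_mult[OF mx my] rep_carrier[OF mx] rep_carrier[OF my]
    by (simp add: mult_smult_distrib[of _ n n] mult_smult_assoc_mat[of _ n n] smult_smult_mat)
  finally show ?thesis using tensor_Q_eq[OF \<open>m > 0\<close>] mx my by simp
qed

end

lemma mat_ring_hom_order_ring_rep:
  assumes "order_of L \<Gamma>" and "mat_ring_hom \<Gamma> n A \<rho>"
  shows "order_ring_rep L \<Gamma> n \<rho>"
  using assms unfolding order_ring_rep_def order_ring_rep_axioms_def additive_order_rep_def
    mat_ring_hom_def mat_over_def by auto

section \<open>Unital ring morphisms from L to M_n(K) with n = [L:K]\<close>

locale field_mat_hom =
  fixes K L :: "complex set" and n :: nat and f :: "complex \<Rightarrow> complex mat"
  assumes number_field: "number_field L" and subfield_K: "subfield_c K" and K_subset: "K \<subseteq> L"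
    and degree: "n = field_degree K L"
    and hom_mat_over: "\<And>x. x \<in> L \<Longrightarrow> f x \<in> mat_over n K"
    and hom_one: "f 1 = 1\<^sub>m n"
    and hom_add: "\<And>x y. x \<in> L \<Longrightarrow> y \<in> L \<Longrightarrow> f (x + y) = f x + f y"
    and hom_mult: "\<And>x y. x \<in> L \<Longrightarrow> y \<in> L \<Longrightarrow> f (x * y) = f x * f y"
begin

lemma subfield_L: "subfield_c L"
  using number_field unfolding number_field_def by blast

lemma degree_pos: "0 < n"
  using field_degree_pos[OF number_field subfield_K K_subset] degree by simp

lemma hom_carrier: "x \<in> L \<Longrightarrow> f x \<in> carrier_mat n n"
  using hom_mat_over unfolding mat_over_def by blast

lemma hom_entry_in: "x \<in> L \<Longrightarrow> i < n \<Longrightarrow> j < n \<Longrightarrow> f x $$ (i, j) \<in> K"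
  using hom_mat_over unfolding mat_over_def by blast

lemma hom_entry_add:
  assumes "x \<in> L" and "y \<in> L" and "i < n" and "j < n"
  shows "f (x + y) $$ (i, j) = f x $$ (i, j) + f y $$ (i, j)"
  using assms hom_carrier[OF assms(1)] hom_carrier[OF assms(2)] by (simp add: hom_add)

lemma hom_entry_Rats_mult:
  assumes "r \<in> \<rat>" and "x \<in> L" and "i < n" and "j < n"
  shows "f (r * x) $$ (i, j) = r * f x $$ (i, j)"
  using additive_on_Rats[OF subfield_L, of "\<lambda>x. f x $$ (i, j)"] hom_entry_add assms by blast

lemma first_col_zero:
  assumes "z \<in> L" and col: "\<And>i. i < n \<Longrightarrow> f z $$ (i, 0) = 0"
  shows "z = 0"
proof (rule ccontr)
  assume "z \<noteq> 0"
  then have "f (inverse z) * f z = 1\<^sub>m n"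
    using hom_mult[OF subfield_c_inverse[OF subfield_L \<open>z \<in> L\<close>] \<open>z \<in> L\<close>] hom_one by simp
  then have "(f (inverse z) * f z) $$ (0, 0) = 1" using degree_pos by simp
  moreover have "(f (inverse z) * f z) $$ (0, 0) = 0"
    using degree_pos col hom_carrier[OF \<open>z \<in> L\<close>]
      hom_carrier[OF subfield_c_inverse[OF subfield_L \<open>z \<in> L\<close>]]
    by (simp add: scalar_prod_def)
  ultimately show False by simp
qed

lemma first_col_inj:
  assumes "x \<in> L" and "y \<in> L" and col: "\<And>i. i < n \<Longrightarrow> f x $$ (i, 0) = f y $$ (i, 0)"
  shows "x = y"
proof -
  have "x - y \<in> L" using subfield_c_diff[OF subfield_L] assms by blast
  have "f x $$ (i, 0) = f y $$ (i, 0) + f (x - y) $$ (i, 0)" if "i < n" for i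
    using hom_entry_add[OF \<open>y \<in> L\<close> \<open>x - y \<in> L\<close> that degree_pos] by simp
  then have "x - y = 0" using first_col_zero[OF \<open>x - y \<in> L\<close>] col by simp
  then show ?thesis by simp
qed

lemma hom_inj: "inj_on f L"
  by (rule inj_onI) (use first_col_inj in simp)

text \<open>Composed with the K-coordinates of a K-basis, the first-column map becomes an injective
  Q-linear endomorphism of L, which is onto since L is finite-dimensional over Q.\<close>

lemma first_col_surj:
  assumes w: "\<forall>i<n. w i \<in> K"
  shows "\<exists>l\<in>L. \<forall>i<n. f l $$ (i, 0) = w i"
proof -
  obtain B where B: "basis_over K B L" and "card B = n"
    using field_degree_basis[OF number_field subfield_K K_subset] degree by metis
  then obtain e where e: "bij_betw e {..<n} B"
    using ex_bij_betw_nat_finite[of B] unfolding basis_over_def atLeast0LessThan by metis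
  have e_in: "e i \<in> L" if "i < n" for i using bij_betw_apply[OF e] that B unfolding basis_over_def by auto
  define h where "h v = (\<Sum>i<n. v i * e i)" for v
  have h_in: "h v \<in> L" if "\<forall>i<n. v i \<in> K" for v
    unfolding h_def using that e_in K_subset
    by (auto intro!: subfield_c_sum[OF subfield_L] subfield_c_mult[OF subfield_L])
  have h_inj: "v i = v' i" if "\<forall>i<n. v i \<in> K" "\<forall>i<n. v' i \<in> K" "h v = h v'" "i < n" for v v' i
    using lin_indep_over_enumD[OF _ e, where F = K and d = "\<lambda>i. v i - v' i" and i = i] B that subfield_c_diff[OF subfield_K]
    unfolding basis_over_def h_def by (simp add: sum_subtractf left_diff_distrib)
  define p where "p x = h (\<lambda>i. f x $$ (i, 0))" for x
  have col_in: "\<forall>i<n. f x $$ (i, 0) \<in> K" if "x \<in> L" for x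
    using hom_entry_in[OF that _ degree_pos] by blast
  obtain BQ where BQ: "basis_over \<rat> BQ L" using number_field unfolding number_field_def by blast
  have "p ` L = L"
  proof (rule Rats_linear_inj_on_imp_surj_on[OF BQ])
    show "p x \<in> L" if "x \<in> L" for x
      unfolding p_def using col_in[OF that] by (rule h_in)
    show "p (x + y) = p x + p y" if "x \<in> L" "y \<in> L" for x y
      unfolding p_def h_def using hom_entry_add[OF that _ degree_pos]
      by (simp add: sum.distrib distrib_right)
    show "p (r * x) = r * p x" if "r \<in> \<rat>" "x \<in> L" for r x
      unfolding p_def h_def using hom_entry_Rats_mult[OF that _ degree_pos]
      by (simp add: sum_distrib_left mult.assoc)
    show "inj_on p L"
    proof (rule inj_onI)
      fix x y assume "x \<in> L" "y \<in> L" "p x = p y"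
      have "f x $$ (i, 0) = f y $$ (i, 0)" if "i < n" for i
        using h_inj[OF col_in[OF \<open>x \<in> L\<close>] col_in[OF \<open>y \<in> L\<close>] \<open>p x = p y\<close>[unfolded p_def] that] .
      then show "x = y" by (rule first_col_inj[OF \<open>x \<in> L\<close> \<open>y \<in> L\<close>])
    qed
  qed
  then obtain l where "l \<in> L" and "p l = h w" using h_in[OF w] by (metis imageE)
  have "f l $$ (i, 0) = w i" if "i < n" for i
    using h_inj[OF col_in[OF \<open>l \<in> L\<close>] w \<open>p l = h w\<close>[unfolded p_def] that] .
  then show ?thesis using \<open>l \<in> L\<close> by blast
qed

text \<open>The first columns of the matrices f y realise every vector of K^n, and f l commutes
  with all of them because L is commutative; this forces f l to be scalar.\<close>

lemma scalar_mat_in_image: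
  assumes "k \<in> K" shows "\<exists>l\<in>L. f l = k \<cdot>\<^sub>m 1\<^sub>m n"
proof -
  have unit_col: "\<exists>y\<in>L. \<forall>i<n. f y $$ (i, 0) = (if i = j then c else 0)" if "c \<in> K" for j c
    using first_col_surj that subfield_c_zero[OF subfield_K] by simp
  obtain l where "l \<in> L" and l: "\<forall>i<n. f l $$ (i, 0) = (if i = 0 then k else 0)"
    using unit_col[OF assms] by blast
  have "f l $$ (i, j) = (k \<cdot>\<^sub>m 1\<^sub>m n) $$ (i, j)" if "i < n" "j < n" for i j
  proof -
    obtain y where "y \<in> L" and y: "\<forall>i<n. f y $$ (i, 0) = (if i = j then 1 else 0)"
      using unit_col[OF subfield_c_one[OF subfield_K]] by blast
    have "f l $$ (i, j) = (f l * f y) $$ (i, 0)"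
      using mat_mult_unit_col[OF hom_carrier hom_carrier that, of l y 1] \<open>l \<in> L\<close> \<open>y \<in> L\<close> y by simp
    also have "\<dots> = (f y * f l) $$ (i, 0)"
      using hom_mult \<open>l \<in> L\<close> \<open>y \<in> L\<close> by (metis mult.commute)
    also have "\<dots> = f y $$ (i, 0) * k"
      using mat_mult_unit_col[OF hom_carrier hom_carrier \<open>i < n\<close> degree_pos, of y l k]
        \<open>l \<in> L\<close> \<open>y \<in> L\<close> l by simp
    also have "\<dots> = (k \<cdot>\<^sub>m 1\<^sub>m n) $$ (i, j)" using y that by simp
    finally show ?thesis .
  qed
  then have "f l = k \<cdot>\<^sub>m 1\<^sub>m n" using hom_carrier[OF \<open>l \<in> L\<close>] by (intro eq_matI) auto
  then show ?thesis using \<open>l \<in> L\<close> by blast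
qed

definition scalar_preimage :: "complex \<Rightarrow> complex" where
  "scalar_preimage k = (THE l. l \<in> L \<and> f l = k \<cdot>\<^sub>m 1\<^sub>m n)"

lemma scalar_preimage_eq:
  assumes "l \<in> L" and "f l = k \<cdot>\<^sub>m 1\<^sub>m n"
  shows "scalar_preimage k = l"
  unfolding scalar_preimage_def
proof (rule the_equality)
  show "l \<in> L \<and> f l = k \<cdot>\<^sub>m 1\<^sub>m n" using assms by blast
  show "l' = l" if "l' \<in> L \<and> f l' = k \<cdot>\<^sub>m 1\<^sub>m n" for l'
    using inj_onD[OF hom_inj, of l' l] that assms by simp
qed

lemma scalar_preimage:
  assumes "k \<in> K"
  shows "scalar_preimage k \<in> L" and "f (scalar_preimage k) = k \<cdot>\<^sub>m 1\<^sub>m n"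
proof -
  obtain l where "l \<in> L" and "f l = k \<cdot>\<^sub>m 1\<^sub>m n" using scalar_mat_in_image[OF assms] by blast
  then show "scalar_preimage k \<in> L" and "f (scalar_preimage k) = k \<cdot>\<^sub>m 1\<^sub>m n"
    using scalar_preimage_eq by simp_all
qed

lemma hom_scalar_preimage_mult:
  assumes "k \<in> K" and "x \<in> L"
  shows "f (scalar_preimage k * x) = k \<cdot>\<^sub>m f x"
  using hom_mult[OF scalar_preimage(1)[OF assms(1)] assms(2)] scalar_preimage(2)[OF assms(1)]
    hom_carrier[OF assms(2)] by (simp add: mult_smult_assoc_mat[of _ n n])

lemma field_ring_hom_scalar_preimage: "field_ring_hom K L scalar_preimage"
  unfolding field_ring_hom_def
proof (intro conjI ballI)
  show "scalar_preimage ` K \<subseteq> L" using scalar_preimage(1) by blast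
  show "scalar_preimage 1 = 1"
    using scalar_preimage_eq[OF subfield_c_one[OF subfield_L]] hom_one
    by simp
next
  fix x y assume "x \<in> K" and "y \<in> K"
  note x = scalar_preimage[OF \<open>x \<in> K\<close>] and y = scalar_preimage[OF \<open>y \<in> K\<close>]
  show "scalar_preimage (x + y) = scalar_preimage x + scalar_preimage y"
    using x y hom_add subfield_c_add[OF subfield_L] subfield_c_add[OF subfield_K \<open>x \<in> K\<close> \<open>y \<in> K\<close>]
    by (intro scalar_preimage_eq) (simp_all add: add_smult_distrib_right_mat[OF one_carrier_mat])
  show "scalar_preimage (x * y) = scalar_preimage x * scalar_preimage y"
    using x y hom_scalar_preimage_mult[OF \<open>x \<in> K\<close>] subfield_c_mult[OF subfield_L]
      subfield_c_mult[OF subfield_K \<open>x \<in> K\<close> \<open>y \<in> K\<close>]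
    by (intro scalar_preimage_eq) (simp_all add: smult_smult_mat)
qed

lemma scalar_compatible_unique:
  assumes "field_ring_hom K L \<psi>" and "\<forall>k\<in>K. \<forall>x\<in>L. f (\<psi> k * x) = k \<cdot>\<^sub>m f x" and "k \<in> K"
  shows "\<psi> k = scalar_preimage k"
proof (rule scalar_preimage_eq[symmetric])
  show "\<psi> k \<in> L" using assms(1,3) unfolding field_ring_hom_def by blast
  show "f (\<psi> k) = k \<cdot>\<^sub>m 1\<^sub>m n"
    using assms(2)[rule_format, OF \<open>k \<in> K\<close> subfield_c_one[OF subfield_L]] hom_one by simp
qed

end

context field_mat_hom
begin

lemma compatible_iff:
  assumes "f = tensor_Q \<Gamma> \<rho>"
  shows "compatible K L n \<Gamma> \<phi> \<rho> \<longleftrightarrow> (\<forall>k\<in>K. \<forall>x\<in>L. f (\<phi> k * x) = k \<cdot>\<^sub>m f x)"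
  using hom_mat_over hom_one hom_add hom_mult unfolding compatible_def Let_def assms[symmetric]
  by blast

lemma scalar_compatible_ex_unique:
  "\<exists>\<phi>. field_ring_hom K L \<phi> \<and> (\<forall>k\<in>K. \<forall>x\<in>L. f (\<phi> k * x) = k \<cdot>\<^sub>m f x)
     \<and> (\<forall>\<psi>. field_ring_hom K L \<psi> \<and> (\<forall>k\<in>K. \<forall>x\<in>L. f (\<psi> k * x) = k \<cdot>\<^sub>m f x)
            \<longrightarrow> (\<forall>k\<in>K. \<psi> k = \<phi> k))"
  using field_ring_hom_scalar_preimage hom_scalar_preimage_mult scalar_compatible_unique by blast

end

lemma compatible_conj:
  assumes \<rho>: "additive_order_rep L \<Gamma> n \<rho>" and K: "subfield_c K" and L: "subfield_c L"
    and \<phi>: "field_ring_hom K L \<phi>" and comp: "compatible K L n \<Gamma> \<phi> \<rho>"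
    and U: "U \<in> mat_over n K" and V: "V \<in> mat_over n K"
    and UV: "U * V = 1\<^sub>m n" and VU: "V * U = 1\<^sub>m n"
  shows "compatible K L n \<Gamma> \<phi> (\<lambda>x. U * \<rho> x * V)"
proof -
  interpret additive_order_rep L \<Gamma> n \<rho> by (rule \<rho>)
  have Uc: "U \<in> carrier_mat n n" and Vc: "V \<in> carrier_mat n n"
    using U V unfolding mat_over_def by auto
  define f where "f = tensor_Q \<Gamma> \<rho>"
  have conj: "tensor_Q \<Gamma> (\<lambda>x. U * \<rho> x * V) x = U * f x * V" if "x \<in> L" for x
    unfolding f_def using tensor_Q_conj[OF Uc Vc that] .
  have f_K: "\<And>x. x \<in> L \<Longrightarrow> f x \<in> mat_over n K" and f_one: "f 1 = 1\<^sub>m n"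
    and f_add: "\<And>x y. x \<in> L \<Longrightarrow> y \<in> L \<Longrightarrow> f (x + y) = f x + f y"
    and f_mult: "\<And>x y. x \<in> L \<Longrightarrow> y \<in> L \<Longrightarrow> f (x * y) = f x * f y"
    and f_scalar: "\<And>k x. k \<in> K \<Longrightarrow> x \<in> L \<Longrightarrow> f (\<phi> k * x) = k \<cdot>\<^sub>m f x"
    using comp unfolding compatible_def Let_def f_def by auto
  have f_carrier: "f x \<in> carrier_mat n n" if "x \<in> L" for x
    using f_K[OF that] unfolding mat_over_def by blast
  show ?thesis
    unfolding compatible_def Let_def
  proof (intro conjI ballI)
    fix x assume "x \<in> L"
    show "tensor_Q \<Gamma> (\<lambda>x. U * \<rho> x * V) x \<in> mat_over n K"
      unfolding conj[OF \<open>x \<in> L\<close>] using U V f_K[OF \<open>x \<in> L\<close>] by (intro mat_over_mult[OF K])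
  next
    show "tensor_Q \<Gamma> (\<lambda>x. U * \<rho> x * V) 1 = 1\<^sub>m n"
      using conj[OF subfield_c_one[OF L]] f_one Uc UV by simp
  next
    fix x y assume "x \<in> L" "y \<in> L"
    then have "x + y \<in> L" and "x * y \<in> L" using L subfield_c_add subfield_c_mult by blast+
    show "tensor_Q \<Gamma> (\<lambda>x. U * \<rho> x * V) (x + y)
        = tensor_Q \<Gamma> (\<lambda>x. U * \<rho> x * V) x + tensor_Q \<Gamma> (\<lambda>x. U * \<rho> x * V) y"
      using conj \<open>x \<in> L\<close> \<open>y \<in> L\<close> \<open>x + y \<in> L\<close> f_add
        f_carrier[OF \<open>x \<in> L\<close>] f_carrier[OF \<open>y \<in> L\<close>] Uc Vc
      by (simp add: mult_add_distrib_mat[of _ n n] add_mult_distrib_mat[of _ n n])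
    show "tensor_Q \<Gamma> (\<lambda>x. U * \<rho> x * V) (x * y)
        = tensor_Q \<Gamma> (\<lambda>x. U * \<rho> x * V) x * tensor_Q \<Gamma> (\<lambda>x. U * \<rho> x * V) y"
      using conj \<open>x \<in> L\<close> \<open>y \<in> L\<close> \<open>x * y \<in> L\<close> f_mult
        mult_conj_mat[OF f_carrier f_carrier Uc Vc VU] by simp
  next
    fix k x assume "k \<in> K" "x \<in> L"
    then have "\<phi> k * x \<in> L" using \<phi> L subfield_c_mult unfolding field_ring_hom_def by blast
    then show "tensor_Q \<Gamma> (\<lambda>x. U * \<rho> x * V) (\<phi> k * x) = k \<cdot>\<^sub>m tensor_Q \<Gamma> (\<lambda>x. U * \<rho> x * V) x"
      using conj \<open>x \<in> L\<close> f_scalar[OF \<open>k \<in> K\<close> \<open>x \<in> L\<close>] f_carrier[OF \<open>x \<in> L\<close>] Uc Vc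
      by (simp add: mult_smult_distrib[of _ n n] mult_smult_assoc_mat[of _ n n])
  qed
qed

lemma ring_of_integers_subset: "ring_of_integers K \<subseteq> K"
  unfolding ring_of_integers_def by blast

theorem lemma10p4:
  fixes L K \<Gamma> :: "complex set" and n :: nat and \<rho> :: "complex \<Rightarrow> complex mat"
  assumes "number_field L"
    and "order_of L \<Gamma>"
    and "subfield_c K" and "K \<subseteq> L"
    and "n = field_degree K L"
    and "mat_ring_hom \<Gamma> n (ring_of_integers K) \<rho>"
  shows "(\<exists>\<phi>. field_ring_hom K L \<phi> \<and> compatible K L n \<Gamma> \<phi> \<rho>
           \<and> (\<forall>\<psi>. field_ring_hom K L \<psi> \<and> compatible K L n \<Gamma> \<psi> \<rho> \<longrightarrow> (\<forall>x\<in>K. \<psi> x = \<phi> x)))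
       \<and> (\<forall>\<phi> U V. field_ring_hom K L \<phi> \<and> compatible K L n \<Gamma> \<phi> \<rho>
            \<and> U \<in> mat_over n (ring_of_integers K) \<and> V \<in> mat_over n (ring_of_integers K)
            \<and> U * V = 1\<^sub>m n \<and> V * U = 1\<^sub>m n
            \<longrightarrow> compatible K L n \<Gamma> \<phi> (\<lambda>x. U * \<rho> x * V))"
proof -
  interpret \<rho>: order_ring_rep L \<Gamma> n \<rho>
    using mat_ring_hom_order_ring_rep[OF assms(2,6)] .
  have O_K: "mat_over n (ring_of_integers K) \<subseteq> mat_over n K"
    by (rule mat_over_mono[OF ring_of_integers_subset])
  have "\<rho> x \<in> mat_over n K" if "x \<in> \<Gamma>" for x
    using assms(6) that O_K unfolding mat_ring_hom_def by blast
  interpret field_mat_hom K L n "tensor_Q \<Gamma> \<rho>"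
    using assms(1,3,4,5) \<rho>.tensor_Q_one \<rho>.tensor_Q_add \<rho>.tensor_Q_mult
      \<rho>.tensor_Q_mat_over[OF assms(3) \<open>\<And>x. x \<in> \<Gamma> \<Longrightarrow> \<rho> x \<in> mat_over n K\<close>]
    by unfold_locales simp_all
  show ?thesis
  proof (intro conjI allI impI)
    show "\<exists>\<phi>. field_ring_hom K L \<phi> \<and> compatible K L n \<Gamma> \<phi> \<rho>
        \<and> (\<forall>\<psi>. field_ring_hom K L \<psi> \<and> compatible K L n \<Gamma> \<psi> \<rho> \<longrightarrow> (\<forall>x\<in>K. \<psi> x = \<phi> x))"
      using scalar_compatible_ex_unique by (simp add: compatible_iff)
  next
    fix \<phi> U V
    assume "field_ring_hom K L \<phi> \<and> compatible K L n \<Gamma> \<phi> \<rho>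
      \<and> U \<in> mat_over n (ring_of_integers K) \<and> V \<in> mat_over n (ring_of_integers K)
      \<and> U * V = 1\<^sub>m n \<and> V * U = 1\<^sub>m n"
    then show "compatible K L n \<Gamma> \<phi> (\<lambda>x. U * \<rho> x * V)"
      using compatible_conj[OF \<rho>.additive_order_rep_axioms assms(3) subfield_L] O_K by blast
  qed
qed

end
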